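(* The cardinality of any SudoQ of size $4\times4$ belongs to the set $\{4,6,8,16\}$.
   Context: For $N\ge1$, a SudoQ (quantum Sudoku) of size $N^2\times N^2$ is an $N^2\times N^2$ array of unit vectors in $\mathbb{C}^{N^2}$ such that the entries of each row, of each column, and of each of the $N^2$ disjoint $N\times N$ blocks (obtained by partitioning rows and columns into $N$ consecutive groups of $N$) form an orthonormal basis of $\mathbb{C}^{N^2}$. Its cardinality is the number of distinct entries, vectors differing only by a global phase being considered equal. Here $N=2$. *)

theory Defs
  imports "HOL-Analysis.Analysis"
begin

definition cinner :: "complex ^ 4 \<Rightarrow> complex ^ 4 \<Rightarrow> complex" where
  "cinner v w = (\<Sum>i\<in>UNIV. cnj (v $ i) * w $ i)"

definition is_onb :: "(nat \<Rightarrow> complex ^ 4) \<Rightarrow> bool" where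
  "is_onb f \<longleftrightarrow>
     (\<forall>k<4. \<forall>l<4. cinner (f k) (f l) = (if k = l then 1 else 0)) \<and>
     (\<forall>w :: complex ^ 4. w = (\<Sum>k<4. cinner (f k) w *s f k))"

definition sudoq4 :: "(nat \<Rightarrow> nat \<Rightarrow> complex ^ 4) \<Rightarrow> bool" where
  "sudoq4 S \<longleftrightarrow>
     (\<forall>i<4. \<forall>j<4. cinner (S i j) (S i j) = 1) \<and>
     (\<forall>i<4. is_onb (\<lambda>j. S i j)) \<and>
     (\<forall>j<4. is_onb (\<lambda>i. S i j)) \<and>
     (\<forall>a<2. \<forall>b<2. is_onb (\<lambda>k. S (2 * a + k div 2) (2 * b + k mod 2)))"

definition phase_eq :: "complex ^ 4 \<Rightarrow> complex ^ 4 \<Rightarrow> bool" where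
  "phase_eq v w \<longleftrightarrow> (\<exists>c. norm c = 1 \<and> w = c *s v)"

definition sudoq_card :: "(nat \<Rightarrow> nat \<Rightarrow> complex ^ 4) \<Rightarrow> nat" where
  "sudoq_card S = card ((\<lambda>(i, j). {w. phase_eq (S i j) w}) ` ({..<4} \<times> {..<4}))"

end

theory Submission
  imports Defs
begin

text \<open>
  The top left block a00, a01, a10, a11 is an orthonormal basis. The tail a02, a03 of row 0 is
  orthogonal to a00, a01, hence an orthonormal basis of the plane of a10, a11; likewise the tail of
  row 1 spans the plane of a00, a01, and the tails of columns 0 and 1 span the planes of a01, a11
  and of a00, a10. Each tail is either aligned with the block (equal to its two spanning vectors
  up to phase) or in general position. An entry of the lower right block is orthogonal to one
  vector of each tail, so its block coordinates solve a cyclic system of four two-term equations;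
  as they do not all vanish, the alignments of the four tails are tied together. What remains is a
  finite case analysis: no tail aligned gives 16 classes, the two row tails (or the two column
  tails) aligned gives 8, all tails aligned gives 4, and every mixed pattern gives 6.
\<close>

section \<open>Orthonormal quadruples in C^4 and equality up to phase\<close>

lemma cinner_cnj: "cinner w v = cnj (cinner v w)"
  unfolding cinner_def by (simp add: mult.commute)

lemma cinner_scale_right [simp]: "cinner v (c *s w) = c * cinner v w"
  unfolding cinner_def by (simp add: sum_distrib_left algebra_simps)

lemma cinner_scale_left [simp]: "cinner (c *s v) w = cnj c * cinner v w"
  unfolding cinner_def by (simp add: sum_distrib_left algebra_simps)

lemma cinner_add_right [simp]: "cinner v (w + u) = cinner v w + cinner v u"
  unfolding cinner_def by (simp add: sum.distrib algebra_simps)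

lemma cinner_zero_left [simp]: "cinner 0 v = 0"
  unfolding cinner_def by simp

definition orthonormal4 :: "complex^4 \<Rightarrow> complex^4 \<Rightarrow> complex^4 \<Rightarrow> complex^4 \<Rightarrow> bool" where
  "orthonormal4 a b c d \<longleftrightarrow>
    cinner a a = 1 \<and> cinner b b = 1 \<and> cinner c c = 1 \<and> cinner d d = 1 \<and>
    cinner a b = 0 \<and> cinner a c = 0 \<and> cinner a d = 0 \<and> cinner b c = 0 \<and> cinner b d = 0 \<and>
    cinner c d = 0 \<and> cinner b a = 0 \<and> cinner c a = 0 \<and> cinner d a = 0 \<and> cinner c b = 0 \<and>
    cinner d b = 0 \<and> cinner d c = 0"

definition onb4 :: "complex^4 \<Rightarrow> complex^4 \<Rightarrow> complex^4 \<Rightarrow> complex^4 \<Rightarrow> bool" where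
  "onb4 a b c d \<longleftrightarrow> orthonormal4 a b c d \<and>
    (\<forall>v. v = cinner a v *s a + cinner b v *s b + cinner c v *s c + cinner d v *s d)"

lemma onb4_orthonormal4: "onb4 a b c d \<Longrightarrow> orthonormal4 a b c d"
  by (simp add: onb4_def)

lemma onb4_expansion:
  "onb4 a b c d \<Longrightarrow> v = cinner a v *s a + cinner b v *s b + cinner c v *s c + cinner d v *s d"
  by (simp add: onb4_def)

lemma onb4_swap12: "onb4 a b c d \<Longrightarrow> onb4 b a c d"
  unfolding onb4_def orthonormal4_def by (simp add: add_ac)

lemma onb4_swap23: "onb4 a b c d \<Longrightarrow> onb4 a c b d"
  unfolding onb4_def orthonormal4_def by (simp add: add_ac)

lemma onb4_swap34: "onb4 a b c d \<Longrightarrow> onb4 a b d c"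
  unfolding onb4_def orthonormal4_def by (simp add: add_ac)

lemma onb4_swap_pairs: "onb4 a b c d \<Longrightarrow> onb4 c d a b"
  unfolding onb4_def orthonormal4_def by (simp add: add_ac)

lemma is_onb_imp_onb4: "is_onb f \<Longrightarrow> onb4 (f 0) (f 1) (f 2) (f 3)"
  unfolding is_onb_def onb4_def orthonormal4_def
  by (simp add: numeral_eq_Suc lessThan_Suc add_ac)

definition phase_class :: "complex^4 \<Rightarrow> (complex^4) set" where
  "phase_class v = {w. phase_eq v w}"

lemma phase_eq_refl: "phase_eq v v"
  unfolding phase_eq_def by (rule exI[of _ 1]) simp

lemma phase_eq_sym:
  assumes "phase_eq u v"
  shows "phase_eq v u"
proof -
  obtain c where c: "cmod c = 1" "v = c *s u"
    using assms unfolding phase_eq_def by blast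
  have "cnj c * c = 1"
    using c(1) by (metis complex_norm_square mult.commute of_real_1 power_one)
  then have "u = cnj c *s v"
    by (simp add: c(2) vector_smult_assoc)
  then show ?thesis
    unfolding phase_eq_def using c(1) by (intro exI[of _ "cnj c"]) simp
qed

lemma phase_eq_trans: "phase_eq u v \<Longrightarrow> phase_eq v w \<Longrightarrow> phase_eq u w"
  unfolding phase_eq_def by (metis norm_mult mult_1_right vector_smult_assoc)

lemma phase_class_eq_iff: "phase_class u = phase_class v \<longleftrightarrow> phase_eq u v"
proof
  assume "phase_class u = phase_class v"
  then show "phase_eq u v"
    using phase_eq_refl unfolding phase_class_def by blast
next
  assume "phase_eq u v"
  then show "phase_class u = phase_class v"
    unfolding phase_class_def by (auto intro: phase_eq_trans phase_eq_sym)
qed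

lemma phase_eq_cinner_left_zero_iff: "phase_eq a b \<Longrightarrow> cinner a v = 0 \<longleftrightarrow> cinner b v = 0"
  unfolding phase_eq_def by auto

lemma phase_eq_cinner_right_zero_iff: "phase_eq u v \<Longrightarrow> cinner e u = 0 \<longleftrightarrow> cinner e v = 0"
  unfolding phase_eq_def by auto

lemma phase_eq_imp_cinner_nonzero: "cinner u u = 1 \<Longrightarrow> phase_eq u v \<Longrightarrow> cinner u v \<noteq> 0"
  unfolding phase_eq_def by auto

lemma onb4_phase_eq_fourth:
  assumes "onb4 a b c d" "cinner v v = 1" "cinner a v = 0" "cinner b v = 0" "cinner c v = 0"
  shows "phase_eq d v"
proof -
  have v: "v = cinner d v *s d"
    using onb4_expansion[OF assms(1), of v] assms by simp
  have "cinner d d = 1"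
    using onb4_orthonormal4[OF assms(1)] by (simp add: orthonormal4_def)
  then have "cnj (cinner d v) * cinner d v = 1"
    using assms(2) by (subst (asm) (1 2) v) (simp add: mult.commute)
  then have "cmod (cinner d v) ^ 2 = 1"
    by (metis complex_norm_square mult.commute of_real_eq_1_iff)
  then have "cmod (cinner d v) = 1"
    using norm_ge_zero[of "cinner d v"] by (auto simp: power2_eq_1_iff)
  then show ?thesis
    unfolding phase_eq_def using v by blast
qed

lemma onb4_orthonormal_pair_in_plane:
  assumes "onb4 p q r s" "cinner u u = 1" "cinner u' u' = 1" "cinner u u' = 0"
    "cinner p u = 0" "cinner q u = 0" "cinner p u' = 0" "cinner q u' = 0" "cinner r u = 0"
  shows "phase_eq s u \<and> phase_eq r u' \<and> cinner s u' = 0 \<and> cinner r u' \<noteq> 0 \<and> cinner s u \<noteq> 0"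
proof -
  have su: "phase_eq s u"
    using onb4_phase_eq_fourth[OF assms(1) assms(2) assms(5,6,9)] .
  then have "cinner s u' = 0"
    using assms(4) phase_eq_cinner_left_zero_iff by blast
  moreover have "phase_eq r u'"
    using onb4_phase_eq_fourth[OF onb4_swap34[OF assms(1)] assms(3) assms(7,8)] calculation .
  ultimately show ?thesis
    using su phase_eq_imp_cinner_nonzero onb4_orthonormal4[OF assms(1)]
    unfolding orthonormal4_def by blast
qed

lemma cycle_equations_products_zero_iff:
  fixes A3 A4 B1 B2 C2 C4 D1 D3 p1 p2 p3 p4 :: complex
  assumes "A3 * p3 + A4 * p4 = 0" "B1 * p1 + B2 * p2 = 0" "C2 * p2 + C4 * p4 = 0"
    "D1 * p1 + D3 * p3 = 0" "\<not> (p1 = 0 \<and> p2 = 0 \<and> p3 = 0 \<and> p4 = 0)"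
  shows "B1 * C2 * A4 * D3 = 0 \<longleftrightarrow> B2 * C4 * A3 * D1 = 0"
proof -
  let ?\<Delta> = "B1 * C2 * A4 * D3 - B2 * C4 * A3 * D1"
  have "?\<Delta> * p1 = 0" "?\<Delta> * p2 = 0" "?\<Delta> * p3 = 0" "?\<Delta> * p4 = 0"
    using assms(1-4) by algebra+
  then have "?\<Delta> = 0"
    using assms(5) by auto
  then show ?thesis
    by simp
qed

lemma cycle_equations_nonzero:
  fixes A3 A4 B1 B2 C2 C4 p1 p2 p3 p4 :: complex
  assumes "A3 * p3 + A4 * p4 = 0" "B1 * p1 + B2 * p2 = 0" "C2 * p2 + C4 * p4 = 0"
    "\<not> (p1 = 0 \<and> p2 = 0 \<and> p3 = 0 \<and> p4 = 0)"
    "A3 \<noteq> 0" "A4 \<noteq> 0" "B1 \<noteq> 0" "B2 \<noteq> 0" "C2 \<noteq> 0" "C4 \<noteq> 0"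
  shows "p1 \<noteq> 0 \<and> p2 \<noteq> 0 \<and> p3 \<noteq> 0 \<and> p4 \<noteq> 0"
proof -
  have "p1 = 0 \<longleftrightarrow> p2 = 0" "p2 = 0 \<longleftrightarrow> p4 = 0" "p3 = 0 \<longleftrightarrow> p4 = 0"
    using assms(1-3,5-10) by (auto simp: add_eq_0_iff)
  then show ?thesis
    using assms(4) by blast
qed

lemma card_phase_classes_eq_length:
  assumes "set R \<subseteq> V" "\<forall>v\<in>V. \<exists>r\<in>set R. phase_eq r v" "distinct (map phase_class R)"
  shows "card (phase_class ` V) = length R"
proof -
  have "phase_class ` V = phase_class ` set R"
  proof
    show "phase_class ` V \<subseteq> phase_class ` set R"
      using assms(2) phase_class_eq_iff by blast
    show "phase_class ` set R \<subseteq> phase_class ` V"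
      using assms(1) by blast
  qed
  then show ?thesis
    using distinct_card[OF assms(3)] by simp
qed

section \<open>The SudoQ grid and its symmetries\<close>

locale sudoq_grid =
  fixes a00 a01 a02 a03 a10 a11 a12 a13 a20 a21 a22 a23 a30 a31 a32 a33 :: "complex^4"
  assumes row0: "onb4 a00 a01 a02 a03" and row1: "onb4 a10 a11 a12 a13"
    and row2: "onb4 a20 a21 a22 a23" and row3: "onb4 a30 a31 a32 a33"
    and col0: "onb4 a00 a10 a20 a30" and col1: "onb4 a01 a11 a21 a31"
    and col2: "onb4 a02 a12 a22 a32" and col3: "onb4 a03 a13 a23 a33"
    and blk00: "onb4 a00 a01 a10 a11" and blk01: "onb4 a02 a03 a12 a13"
    and blk10: "onb4 a20 a21 a30 a31" and blk11: "onb4 a22 a23 a32 a33"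
begin

abbreviation entries :: "(complex^4) set" where
  "entries \<equiv> set [a00, a01, a02, a03, a10, a11, a12, a13, a20, a21, a22, a23, a30, a31, a32, a33]"

lemma grid_transpose:
  "sudoq_grid a00 a10 a20 a30 a01 a11 a21 a31 a02 a12 a22 a32 a03 a13 a23 a33"
  unfolding sudoq_grid_def using row0 row1 row2 row3 col0 col1 col2 col3
    onb4_swap23[OF blk00] onb4_swap23[OF blk01] onb4_swap23[OF blk10] onb4_swap23[OF blk11]
  by simp

lemma grid_swap_rows01:
  "sudoq_grid a10 a11 a12 a13 a00 a01 a02 a03 a20 a21 a22 a23 a30 a31 a32 a33"
  unfolding sudoq_grid_def using row0 row1 row2 row3 blk10 blk11
    onb4_swap12[OF col0] onb4_swap12[OF col1] onb4_swap12[OF col2] onb4_swap12[OF col3]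
    onb4_swap_pairs[OF blk00] onb4_swap_pairs[OF blk01]
  by simp

lemma grid_swap_rows23:
  "sudoq_grid a00 a01 a02 a03 a10 a11 a12 a13 a30 a31 a32 a33 a20 a21 a22 a23"
  unfolding sudoq_grid_def using row0 row1 row2 row3 blk00 blk01
    onb4_swap34[OF col0] onb4_swap34[OF col1] onb4_swap34[OF col2] onb4_swap34[OF col3]
    onb4_swap_pairs[OF blk10] onb4_swap_pairs[OF blk11]
  by simp

lemma grid_swap_cols01:
  "sudoq_grid a01 a00 a02 a03 a11 a10 a12 a13 a21 a20 a22 a23 a31 a30 a32 a33"
  unfolding sudoq_grid_def using col0 col1 col2 col3 blk01 blk11
    onb4_swap12[OF row0] onb4_swap12[OF row1] onb4_swap12[OF row2] onb4_swap12[OF row3]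
    onb4_swap12[OF onb4_swap34[OF blk00]] onb4_swap12[OF onb4_swap34[OF blk10]]
  by simp

lemma entries_transpose:
  "set [a00, a10, a20, a30, a01, a11, a21, a31, a02, a12, a22, a32, a03, a13, a23, a33] = entries"
  by (simp add: insert_commute)

lemma entries_swap_rows01:
  "set [a10, a11, a12, a13, a00, a01, a02, a03, a20, a21, a22, a23, a30, a31, a32, a33] = entries"
  by (simp add: insert_commute)

lemma entries_swap_rows23:
  "set [a00, a01, a02, a03, a10, a11, a12, a13, a30, a31, a32, a33, a20, a21, a22, a23] = entries"
  by (simp add: insert_commute)

lemma entries_swap_cols01:
  "set [a01, a00, a02, a03, a11, a10, a12, a13, a21, a20, a22, a23, a31, a30, a32, a33] = entries"
  by (simp add: insert_commute)

lemmas orth =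
  row0[THEN onb4_orthonormal4, unfolded orthonormal4_def]
  row1[THEN onb4_orthonormal4, unfolded orthonormal4_def]
  row2[THEN onb4_orthonormal4, unfolded orthonormal4_def]
  row3[THEN onb4_orthonormal4, unfolded orthonormal4_def]
  col0[THEN onb4_orthonormal4, unfolded orthonormal4_def]
  col1[THEN onb4_orthonormal4, unfolded orthonormal4_def]
  col2[THEN onb4_orthonormal4, unfolded orthonormal4_def]
  col3[THEN onb4_orthonormal4, unfolded orthonormal4_def]
  blk00[THEN onb4_orthonormal4, unfolded orthonormal4_def]
  blk01[THEN onb4_orthonormal4, unfolded orthonormal4_def]
  blk10[THEN onb4_orthonormal4, unfolded orthonormal4_def]
  blk11[THEN onb4_orthonormal4, unfolded orthonormal4_def]

lemma blk00_perms:
  "onb4 a00 a01 a11 a10" "onb4 a10 a11 a00 a01" "onb4 a10 a11 a01 a00"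
  "onb4 a00 a10 a01 a11" "onb4 a00 a10 a11 a01" "onb4 a01 a11 a00 a10" "onb4 a01 a11 a10 a00"
  "onb4 a01 a10 a11 a00"
  using blk00 by (meson onb4_swap12 onb4_swap23 onb4_swap34 onb4_swap_pairs)+

lemma cinner_blk00_expansion:
  "cinner u v = cnj (cinner a00 u) * cinner a00 v + cnj (cinner a01 u) * cinner a01 v
    + cnj (cinner a10 u) * cinner a10 v + cnj (cinner a11 u) * cinner a11 v"
proof -
  have "cinner u v = cinner u (cinner a00 v *s a00 + cinner a01 v *s a01
      + cinner a10 v *s a10 + cinner a11 v *s a11)"
    using onb4_expansion[OF blk00, of v] by simp
  then show ?thesis
    by (simp add: cinner_cnj[of u] mult.commute)
qed

lemma perp_in_plane_a10_a11:
  "cinner u f = 0 \<Longrightarrow> cinner a00 u = 0 \<Longrightarrow> cinner a01 u = 0 \<Longrightarrow>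
    cnj (cinner a10 u) * cinner a10 f + cnj (cinner a11 u) * cinner a11 f = 0"
  using cinner_blk00_expansion[of u f] by simp

lemma perp_in_plane_a00_a01:
  "cinner u f = 0 \<Longrightarrow> cinner a10 u = 0 \<Longrightarrow> cinner a11 u = 0 \<Longrightarrow>
    cnj (cinner a00 u) * cinner a00 f + cnj (cinner a01 u) * cinner a01 f = 0"
  using cinner_blk00_expansion[of u f] by simp

lemma perp_in_plane_a01_a11:
  "cinner u f = 0 \<Longrightarrow> cinner a00 u = 0 \<Longrightarrow> cinner a10 u = 0 \<Longrightarrow>
    cnj (cinner a01 u) * cinner a01 f + cnj (cinner a11 u) * cinner a11 f = 0"
  using cinner_blk00_expansion[of u f] by simp

lemma perp_in_plane_a00_a10:
  "cinner u f = 0 \<Longrightarrow> cinner a01 u = 0 \<Longrightarrow> cinner a11 u = 0 \<Longrightarrow>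
    cnj (cinner a00 u) * cinner a00 f + cnj (cinner a10 u) * cinner a10 f = 0"
  using cinner_blk00_expansion[of u f] by simp

lemma unit_blk00_coords_nonzero:
  "cinner f f = 1 \<Longrightarrow>
    \<not> (cinner a00 f = 0 \<and> cinner a01 f = 0 \<and> cinner a10 f = 0 \<and> cinner a11 f = 0)"
  using onb4_expansion[OF blk00, of f] by auto

lemma unit_phase_eq_blk00:
  assumes "cinner f f = 1"
  shows "cinner a00 f = 0 \<and> cinner a01 f = 0 \<and> cinner a10 f = 0 \<longrightarrow> phase_eq a11 f"
    "cinner a00 f = 0 \<and> cinner a01 f = 0 \<and> cinner a11 f = 0 \<longrightarrow> phase_eq a10 f"
    "cinner a00 f = 0 \<and> cinner a10 f = 0 \<and> cinner a11 f = 0 \<longrightarrow> phase_eq a01 f"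
    "cinner a01 f = 0 \<and> cinner a10 f = 0 \<and> cinner a11 f = 0 \<longrightarrow> phase_eq a00 f"
  using onb4_phase_eq_fourth[OF blk00 assms] onb4_phase_eq_fourth[OF blk00_perms(1) assms]
    onb4_phase_eq_fourth[OF blk00_perms(5) assms] onb4_phase_eq_fourth[OF blk00_perms(8) assms]
  by blast+

lemma not_phase_eq_by_blk00_coord:
  "cinner a00 u = 0 \<Longrightarrow> cinner a00 v \<noteq> 0 \<Longrightarrow> \<not> phase_eq u v"
  "cinner a01 u = 0 \<Longrightarrow> cinner a01 v \<noteq> 0 \<Longrightarrow> \<not> phase_eq u v"
  "cinner a10 u = 0 \<Longrightarrow> cinner a10 v \<noteq> 0 \<Longrightarrow> \<not> phase_eq u v"
  "cinner a11 u = 0 \<Longrightarrow> cinner a11 v \<noteq> 0 \<Longrightarrow> \<not> phase_eq u v"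
  "cinner a00 u \<noteq> 0 \<Longrightarrow> cinner a00 v = 0 \<Longrightarrow> \<not> phase_eq u v"
  "cinner a01 u \<noteq> 0 \<Longrightarrow> cinner a01 v = 0 \<Longrightarrow> \<not> phase_eq u v"
  "cinner a10 u \<noteq> 0 \<Longrightarrow> cinner a10 v = 0 \<Longrightarrow> \<not> phase_eq u v"
  "cinner a11 u \<noteq> 0 \<Longrightarrow> cinner a11 v = 0 \<Longrightarrow> \<not> phase_eq u v"
  using phase_eq_cinner_right_zero_iff by blast+

lemma not_phase_eq_of_perp: "cinner u u = 1 \<Longrightarrow> cinner u v = 0 \<Longrightarrow> \<not> phase_eq u v"
  using phase_eq_imp_cinner_nonzero by blast

lemma perp_a10_a02: "cinner a10 a02 = 0 \<Longrightarrow>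
    phase_eq a11 a02 \<and> phase_eq a10 a03 \<and> cinner a11 a03 = 0 \<and> cinner a10 a03 \<noteq> 0 \<and> cinner a11 a02 \<noteq> 0"
  by (rule onb4_orthonormal_pair_in_plane[OF blk00]) (simp_all add: orth)

lemma perp_a11_a02: "cinner a11 a02 = 0 \<Longrightarrow>
    phase_eq a10 a02 \<and> phase_eq a11 a03 \<and> cinner a10 a03 = 0 \<and> cinner a11 a03 \<noteq> 0 \<and> cinner a10 a02 \<noteq> 0"
  by (rule onb4_orthonormal_pair_in_plane[OF blk00_perms(1)]) (simp_all add: orth)

lemma perp_a10_a03: "cinner a10 a03 = 0 \<Longrightarrow>
    phase_eq a11 a03 \<and> phase_eq a10 a02 \<and> cinner a11 a02 = 0 \<and> cinner a10 a02 \<noteq> 0 \<and> cinner a11 a03 \<noteq> 0"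
  by (rule onb4_orthonormal_pair_in_plane[OF blk00]) (simp_all add: orth)

lemma perp_a11_a03: "cinner a11 a03 = 0 \<Longrightarrow>
    phase_eq a10 a03 \<and> phase_eq a11 a02 \<and> cinner a10 a02 = 0 \<and> cinner a11 a02 \<noteq> 0 \<and> cinner a10 a03 \<noteq> 0"
  by (rule onb4_orthonormal_pair_in_plane[OF blk00_perms(1)]) (simp_all add: orth)

lemma perp_a00_a12: "cinner a00 a12 = 0 \<Longrightarrow>
    phase_eq a01 a12 \<and> phase_eq a00 a13 \<and> cinner a01 a13 = 0 \<and> cinner a00 a13 \<noteq> 0 \<and> cinner a01 a12 \<noteq> 0"
  by (rule onb4_orthonormal_pair_in_plane[OF blk00_perms(2)]) (simp_all add: orth)

lemma perp_a01_a12: "cinner a01 a12 = 0 \<Longrightarrow>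
    phase_eq a00 a12 \<and> phase_eq a01 a13 \<and> cinner a00 a13 = 0 \<and> cinner a01 a13 \<noteq> 0 \<and> cinner a00 a12 \<noteq> 0"
  by (rule onb4_orthonormal_pair_in_plane[OF blk00_perms(3)]) (simp_all add: orth)

lemma perp_a00_a13: "cinner a00 a13 = 0 \<Longrightarrow>
    phase_eq a01 a13 \<and> phase_eq a00 a12 \<and> cinner a01 a12 = 0 \<and> cinner a00 a12 \<noteq> 0 \<and> cinner a01 a13 \<noteq> 0"
  by (rule onb4_orthonormal_pair_in_plane[OF blk00_perms(2)]) (simp_all add: orth)

lemma perp_a01_a13: "cinner a01 a13 = 0 \<Longrightarrow>
    phase_eq a00 a13 \<and> phase_eq a01 a12 \<and> cinner a00 a12 = 0 \<and> cinner a01 a12 \<noteq> 0 \<and> cinner a00 a13 \<noteq> 0"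
  by (rule onb4_orthonormal_pair_in_plane[OF blk00_perms(3)]) (simp_all add: orth)

lemma perp_a01_a20: "cinner a01 a20 = 0 \<Longrightarrow>
    phase_eq a11 a20 \<and> phase_eq a01 a30 \<and> cinner a11 a30 = 0 \<and> cinner a01 a30 \<noteq> 0 \<and> cinner a11 a20 \<noteq> 0"
  by (rule onb4_orthonormal_pair_in_plane[OF blk00_perms(4)]) (simp_all add: orth)

lemma perp_a11_a20: "cinner a11 a20 = 0 \<Longrightarrow>
    phase_eq a01 a20 \<and> phase_eq a11 a30 \<and> cinner a01 a30 = 0 \<and> cinner a11 a30 \<noteq> 0 \<and> cinner a01 a20 \<noteq> 0"
  by (rule onb4_orthonormal_pair_in_plane[OF blk00_perms(5)]) (simp_all add: orth)

lemma perp_a01_a30: "cinner a01 a30 = 0 \<Longrightarrow>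
    phase_eq a11 a30 \<and> phase_eq a01 a20 \<and> cinner a11 a20 = 0 \<and> cinner a01 a20 \<noteq> 0 \<and> cinner a11 a30 \<noteq> 0"
  by (rule onb4_orthonormal_pair_in_plane[OF blk00_perms(4)]) (simp_all add: orth)

lemma perp_a11_a30: "cinner a11 a30 = 0 \<Longrightarrow>
    phase_eq a01 a30 \<and> phase_eq a11 a20 \<and> cinner a01 a20 = 0 \<and> cinner a11 a20 \<noteq> 0 \<and> cinner a01 a30 \<noteq> 0"
  by (rule onb4_orthonormal_pair_in_plane[OF blk00_perms(5)]) (simp_all add: orth)

lemma perp_a00_a21: "cinner a00 a21 = 0 \<Longrightarrow>
    phase_eq a10 a21 \<and> phase_eq a00 a31 \<and> cinner a10 a31 = 0 \<and> cinner a00 a31 \<noteq> 0 \<and> cinner a10 a21 \<noteq> 0"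
  by (rule onb4_orthonormal_pair_in_plane[OF blk00_perms(6)]) (simp_all add: orth)

lemma perp_a10_a21: "cinner a10 a21 = 0 \<Longrightarrow>
    phase_eq a00 a21 \<and> phase_eq a10 a31 \<and> cinner a00 a31 = 0 \<and> cinner a10 a31 \<noteq> 0 \<and> cinner a00 a21 \<noteq> 0"
  by (rule onb4_orthonormal_pair_in_plane[OF blk00_perms(7)]) (simp_all add: orth)

lemma perp_a00_a31: "cinner a00 a31 = 0 \<Longrightarrow>
    phase_eq a10 a31 \<and> phase_eq a00 a21 \<and> cinner a10 a21 = 0 \<and> cinner a00 a21 \<noteq> 0 \<and> cinner a10 a31 \<noteq> 0"
  by (rule onb4_orthonormal_pair_in_plane[OF blk00_perms(6)]) (simp_all add: orth)

lemma perp_a10_a31: "cinner a10 a31 = 0 \<Longrightarrow>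
    phase_eq a00 a31 \<and> phase_eq a10 a21 \<and> cinner a00 a21 = 0 \<and> cinner a10 a21 \<noteq> 0 \<and> cinner a00 a31 \<noteq> 0"
  by (rule onb4_orthonormal_pair_in_plane[OF blk00_perms(7)]) (simp_all add: orth)

lemma perp_a10_a02_lower_block: "cinner a10 a02 = 0 \<Longrightarrow>
    cinner a11 a22 = 0 \<and> cinner a11 a32 = 0 \<and> cinner a10 a23 = 0 \<and> cinner a10 a33 = 0"
  using perp_a10_a02 phase_eq_cinner_left_zero_iff by (auto simp: orth)

lemma perp_a11_a02_lower_block: "cinner a11 a02 = 0 \<Longrightarrow>
    cinner a10 a22 = 0 \<and> cinner a10 a32 = 0 \<and> cinner a11 a23 = 0 \<and> cinner a11 a33 = 0"
  using perp_a11_a02 phase_eq_cinner_left_zero_iff by (auto simp: orth)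

lemma perp_a00_a12_lower_block: "cinner a00 a12 = 0 \<Longrightarrow>
    cinner a01 a22 = 0 \<and> cinner a01 a32 = 0 \<and> cinner a00 a23 = 0 \<and> cinner a00 a33 = 0"
  using perp_a00_a12 phase_eq_cinner_left_zero_iff by (auto simp: orth)

lemma perp_a01_a12_lower_block: "cinner a01 a12 = 0 \<Longrightarrow>
    cinner a00 a22 = 0 \<and> cinner a00 a32 = 0 \<and> cinner a01 a23 = 0 \<and> cinner a01 a33 = 0"
  using perp_a01_a12 phase_eq_cinner_left_zero_iff by (auto simp: orth)

lemma perp_a01_a20_lower_block: "cinner a01 a20 = 0 \<Longrightarrow>
    cinner a11 a22 = 0 \<and> cinner a11 a23 = 0 \<and> cinner a01 a32 = 0 \<and> cinner a01 a33 = 0"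
  using perp_a01_a20 phase_eq_cinner_left_zero_iff by (auto simp: orth)

lemma perp_a11_a20_lower_block: "cinner a11 a20 = 0 \<Longrightarrow>
    cinner a01 a22 = 0 \<and> cinner a01 a23 = 0 \<and> cinner a11 a32 = 0 \<and> cinner a11 a33 = 0"
  using perp_a11_a20 phase_eq_cinner_left_zero_iff by (auto simp: orth)

lemma perp_a00_a21_lower_block: "cinner a00 a21 = 0 \<Longrightarrow>
    cinner a10 a22 = 0 \<and> cinner a10 a23 = 0 \<and> cinner a00 a32 = 0 \<and> cinner a00 a33 = 0"
  using perp_a00_a21 phase_eq_cinner_left_zero_iff by (auto simp: orth)

lemma perp_a10_a21_lower_block: "cinner a10 a21 = 0 \<Longrightarrow>
    cinner a00 a22 = 0 \<and> cinner a00 a23 = 0 \<and> cinner a10 a32 = 0 \<and> cinner a10 a33 = 0"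
  using perp_a10_a21 phase_eq_cinner_left_zero_iff by (auto simp: orth)

section \<open>Case analysis by alignment of the tails\<close>

text \<open>By the perp lemmas, a tail is aligned (consists of block vectors up to phase) iff its first
  vector is orthogonal to one of the two block vectors spanning its plane.\<close>

abbreviation row0_tail_aligned :: bool where
  "row0_tail_aligned \<equiv> cinner a10 a02 = 0 \<or> cinner a11 a02 = 0"

abbreviation row1_tail_aligned :: bool where
  "row1_tail_aligned \<equiv> cinner a00 a12 = 0 \<or> cinner a01 a12 = 0"

abbreviation col0_tail_aligned :: bool where
  "col0_tail_aligned \<equiv> cinner a01 a20 = 0 \<or> cinner a11 a20 = 0"

abbreviation col1_tail_aligned :: bool where
  "col1_tail_aligned \<equiv> cinner a00 a21 = 0 \<or> cinner a10 a21 = 0"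

lemma card_no_tail_aligned:
  assumes "\<not> row0_tail_aligned" "\<not> row1_tail_aligned" "\<not> col0_tail_aligned" "\<not> col1_tail_aligned"
  shows "card (phase_class ` entries) = 16"
proof -
  have g: "cinner a10 a02 \<noteq> 0" "cinner a11 a02 \<noteq> 0" "cinner a00 a12 \<noteq> 0" "cinner a01 a12 \<noteq> 0"
    "cinner a01 a20 \<noteq> 0" "cinner a11 a20 \<noteq> 0" "cinner a00 a21 \<noteq> 0" "cinner a10 a21 \<noteq> 0"
    using assms by auto
  have p: "cinner a10 a03 \<noteq> 0" "cinner a11 a03 \<noteq> 0" "cinner a00 a13 \<noteq> 0" "cinner a01 a13 \<noteq> 0"
    "cinner a01 a30 \<noteq> 0" "cinner a11 a30 \<noteq> 0" "cinner a00 a31 \<noteq> 0" "cinner a10 a31 \<noteq> 0"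
    using g perp_a10_a03 perp_a11_a03 perp_a00_a13 perp_a01_a13
      perp_a01_a30 perp_a11_a30 perp_a00_a31 perp_a10_a31 by blast+
  have "cinner a00 a22 \<noteq> 0 \<and> cinner a01 a22 \<noteq> 0 \<and> cinner a10 a22 \<noteq> 0 \<and> cinner a11 a22 \<noteq> 0"
    by (rule cycle_equations_nonzero[OF perp_in_plane_a10_a11[of a02 a22]
          perp_in_plane_a00_a01[of a12 a22] perp_in_plane_a01_a11[of a20 a22]
          unit_blk00_coords_nonzero[of a22]])
      (simp_all add: orth g p)
  moreover have "cinner a00 a23 \<noteq> 0 \<and> cinner a01 a23 \<noteq> 0 \<and> cinner a10 a23 \<noteq> 0 \<and> cinner a11 a23 \<noteq> 0"
    by (rule cycle_equations_nonzero[OF perp_in_plane_a10_a11[of a03 a23]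
          perp_in_plane_a00_a01[of a13 a23] perp_in_plane_a01_a11[of a20 a23]
          unit_blk00_coords_nonzero[of a23]])
      (simp_all add: orth g p)
  moreover have "cinner a00 a32 \<noteq> 0 \<and> cinner a01 a32 \<noteq> 0 \<and> cinner a10 a32 \<noteq> 0 \<and> cinner a11 a32 \<noteq> 0"
    by (rule cycle_equations_nonzero[OF perp_in_plane_a10_a11[of a02 a32]
          perp_in_plane_a00_a01[of a12 a32] perp_in_plane_a01_a11[of a30 a32]
          unit_blk00_coords_nonzero[of a32]])
      (simp_all add: orth g p)
  moreover have "cinner a00 a33 \<noteq> 0 \<and> cinner a01 a33 \<noteq> 0 \<and> cinner a10 a33 \<noteq> 0 \<and> cinner a11 a33 \<noteq> 0"
    by (rule cycle_equations_nonzero[OF perp_in_plane_a10_a11[of a03 a33]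
          perp_in_plane_a00_a01[of a13 a33] perp_in_plane_a01_a11[of a30 a33]
          unit_blk00_coords_nonzero[of a33]])
      (simp_all add: orth g p)
  ultimately have "card (phase_class ` entries) =
      length [a00, a01, a02, a03, a10, a11, a12, a13, a20, a21, a22, a23, a30, a31, a32, a33]"
    by (intro card_phase_classes_eq_length)
      (simp_all add: phase_eq_refl phase_class_eq_iff not_phase_eq_of_perp
        not_phase_eq_by_blk00_coord orth g p)
  then show ?thesis
    by simp
qed

lemma cycle_condition_a22:
  "cinner a00 a12 = 0 \<or> cinner a01 a20 = 0 \<or> cinner a11 a02 = 0 \<or> cinner a10 a21 = 0 \<longleftrightarrow>
    cinner a01 a12 = 0 \<or> cinner a11 a20 = 0 \<or> cinner a10 a02 = 0 \<or> cinner a00 a21 = 0"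
proof -
  have "cnj (cinner a00 a12) * cnj (cinner a01 a20) * cnj (cinner a11 a02) * cnj (cinner a10 a21) = 0
    \<longleftrightarrow> cnj (cinner a01 a12) * cnj (cinner a11 a20) * cnj (cinner a10 a02) * cnj (cinner a00 a21) = 0"
    by (rule cycle_equations_products_zero_iff[OF perp_in_plane_a10_a11[of a02 a22]
          perp_in_plane_a00_a01[of a12 a22] perp_in_plane_a01_a11[of a20 a22]
          perp_in_plane_a00_a10[of a21 a22] unit_blk00_coords_nonzero[of a22]])
      (simp_all add: orth)
  then show ?thesis
    by simp
qed

lemma cycle_condition_a32:
  "cinner a00 a12 = 0 \<or> cinner a01 a30 = 0 \<or> cinner a11 a02 = 0 \<or> cinner a10 a31 = 0 \<longleftrightarrow>
    cinner a01 a12 = 0 \<or> cinner a11 a30 = 0 \<or> cinner a10 a02 = 0 \<or> cinner a00 a31 = 0"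
proof -
  have "cnj (cinner a00 a12) * cnj (cinner a01 a30) * cnj (cinner a11 a02) * cnj (cinner a10 a31) = 0
    \<longleftrightarrow> cnj (cinner a01 a12) * cnj (cinner a11 a30) * cnj (cinner a10 a02) * cnj (cinner a00 a31) = 0"
    by (rule cycle_equations_products_zero_iff[OF perp_in_plane_a10_a11[of a02 a32]
          perp_in_plane_a00_a01[of a12 a32] perp_in_plane_a01_a11[of a30 a32]
          perp_in_plane_a00_a10[of a31 a32] unit_blk00_coords_nonzero[of a32]])
      (simp_all add: orth)
  then show ?thesis
    by simp
qed

lemma card_row_tails_phase_eq_blk00:
  assumes "\<not> col0_tail_aligned" "\<not> col1_tail_aligned"
    and xp: "phase_eq a10 a02" "phase_eq a11 a03" "phase_eq a00 a12" "phase_eq a01 a13"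
  shows "card (phase_class ` entries) = 8"
proof -
  have g: "cinner a01 a20 \<noteq> 0" "cinner a11 a20 \<noteq> 0" "cinner a00 a21 \<noteq> 0" "cinner a10 a21 \<noteq> 0"
    using assms(1,2) by auto
  have p: "cinner a01 a30 \<noteq> 0" "cinner a11 a30 \<noteq> 0" "cinner a00 a31 \<noteq> 0" "cinner a10 a31 \<noteq> 0"
    using g perp_a01_a30 perp_a11_a30 perp_a00_a31 perp_a10_a31 by blast+
  note xp_zero = phase_eq_cinner_left_zero_iff[OF xp(1)] phase_eq_cinner_left_zero_iff[OF xp(2)]
    phase_eq_cinner_left_zero_iff[OF xp(3)] phase_eq_cinner_left_zero_iff[OF xp(4)]
  have "phase_eq a30 a22"
    by (rule onb4_phase_eq_fourth[OF col0]) (simp_all add: orth xp_zero)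
  moreover have "phase_eq a31 a23"
    by (rule onb4_phase_eq_fourth[OF col1]) (simp_all add: orth xp_zero)
  moreover have "phase_eq a20 a32"
    by (rule onb4_phase_eq_fourth[OF onb4_swap34[OF col0]]) (simp_all add: orth xp_zero)
  moreover have "phase_eq a21 a33"
    by (rule onb4_phase_eq_fourth[OF onb4_swap34[OF col1]]) (simp_all add: orth xp_zero)
  ultimately have "card (phase_class ` entries) = length [a00, a01, a10, a11, a20, a21, a30, a31]"
    by (intro card_phase_classes_eq_length)
      (simp_all add: phase_eq_refl xp phase_class_eq_iff not_phase_eq_of_perp
        not_phase_eq_by_blk00_coord orth g p)
  then show ?thesis
    by simp
qed

lemma card_row_tails_aligned:
  assumes "row0_tail_aligned" "row1_tail_aligned" "\<not> col0_tail_aligned" "\<not> col1_tail_aligned"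
  shows "card (phase_class ` entries) = 8"
proof -
  have cycle: "cinner a00 a12 = 0 \<or> cinner a11 a02 = 0 \<longleftrightarrow> cinner a01 a12 = 0 \<or> cinner a10 a02 = 0"
    using cycle_condition_a22 assms(3,4) by simp
  show ?thesis
  proof (cases "cinner a10 a02 = 0")
    case True
    then have "cinner a00 a12 = 0"
      using cycle perp_a10_a02 by blast
    then show ?thesis
      using sudoq_grid.card_row_tails_phase_eq_blk00[OF grid_swap_cols01,
          unfolded entries_swap_cols01]
        assms(3,4) perp_a10_a02[OF True] perp_a00_a12 by blast
  next
    case False
    then have "cinner a11 a02 = 0"
      using assms(1) by blast
    moreover from this have "cinner a01 a12 = 0"
      using cycle False by blast
    ultimately show ?thesis
      using card_row_tails_phase_eq_blk00 assms(3,4) perp_a11_a02 perp_a01_a12 by blast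
  qed
qed

lemma card_all_tails_aligned:
  assumes "row0_tail_aligned" "row1_tail_aligned" "col0_tail_aligned" "col1_tail_aligned"
  shows "card (phase_class ` entries) = 4"
proof -
  have unit: "cinner a22 a22 = 1" "cinner a23 a23 = 1" "cinner a32 a32 = 1" "cinner a33 a33 = 1"
    by (simp_all add: orth)
  note L = unit_phase_eq_blk00[OF unit(1)] unit_phase_eq_blk00[OF unit(2)]
    unit_phase_eq_blk00[OF unit(3)] unit_phase_eq_blk00[OF unit(4)]
  note N = unit_blk00_coords_nonzero[OF unit(1)] unit_blk00_coords_nonzero[OF unit(2)]
    unit_blk00_coords_nonzero[OF unit(3)] unit_blk00_coords_nonzero[OF unit(4)]
  text \<open>In each of the 16 alignment patterns, every lower right entry has three vanishing block
    coordinates.\<close>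
  have lower: "(phase_eq a00 a22 \<or> phase_eq a01 a22 \<or> phase_eq a10 a22 \<or> phase_eq a11 a22) \<and>
    (phase_eq a00 a23 \<or> phase_eq a01 a23 \<or> phase_eq a10 a23 \<or> phase_eq a11 a23) \<and>
    (phase_eq a00 a32 \<or> phase_eq a01 a32 \<or> phase_eq a10 a32 \<or> phase_eq a11 a32) \<and>
    (phase_eq a00 a33 \<or> phase_eq a01 a33 \<or> phase_eq a10 a33 \<or> phase_eq a11 a33)"
    apply (insert assms)
    apply (elim disjE; drule perp_a10_a02_lower_block perp_a11_a02_lower_block;
        drule perp_a00_a12_lower_block perp_a01_a12_lower_block;
        drule perp_a01_a20_lower_block perp_a11_a20_lower_block;
        drule perp_a00_a21_lower_block perp_a10_a21_lower_block; elim conjE)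
    using L N by simp_all
  have tails: "(phase_eq a00 a02 \<or> phase_eq a01 a02 \<or> phase_eq a10 a02 \<or> phase_eq a11 a02) \<and>
    (phase_eq a00 a03 \<or> phase_eq a01 a03 \<or> phase_eq a10 a03 \<or> phase_eq a11 a03) \<and>
    (phase_eq a00 a12 \<or> phase_eq a01 a12 \<or> phase_eq a10 a12 \<or> phase_eq a11 a12) \<and>
    (phase_eq a00 a13 \<or> phase_eq a01 a13 \<or> phase_eq a10 a13 \<or> phase_eq a11 a13) \<and>
    (phase_eq a00 a20 \<or> phase_eq a01 a20 \<or> phase_eq a10 a20 \<or> phase_eq a11 a20) \<and>
    (phase_eq a00 a30 \<or> phase_eq a01 a30 \<or> phase_eq a10 a30 \<or> phase_eq a11 a30) \<and>
    (phase_eq a00 a21 \<or> phase_eq a01 a21 \<or> phase_eq a10 a21 \<or> phase_eq a11 a21) \<and>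
    (phase_eq a00 a31 \<or> phase_eq a01 a31 \<or> phase_eq a10 a31 \<or> phase_eq a11 a31)"
    using assms perp_a10_a02 perp_a11_a02 perp_a00_a12 perp_a01_a12
      perp_a01_a20 perp_a11_a20 perp_a00_a21 perp_a10_a21 by blast
  have "card (phase_class ` entries) = length [a00, a01, a10, a11]"
    by (intro card_phase_classes_eq_length)
      (use lower tails in \<open>simp_all add: phase_eq_refl phase_class_eq_iff not_phase_eq_of_perp orth\<close>)
  then show ?thesis
    by simp
qed

lemma col_tails_aligned_of_perp_a10_a02:
  assumes "cinner a10 a02 = 0" "\<not> row1_tail_aligned"
  shows "cinner a01 a20 = 0 \<and> cinner a00 a21 = 0 \<or> cinner a10 a21 = 0 \<and> cinner a11 a20 = 0"
proof -
  have "cinner a11 a02 \<noteq> 0"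
    using perp_a10_a02[OF assms(1)] by blast
  then have "cinner a01 a20 = 0 \<or> cinner a10 a21 = 0"
    and "cinner a01 a30 = 0 \<or> cinner a10 a31 = 0"
    using cycle_condition_a22 cycle_condition_a32 assms by blast+
  then have "cinner a01 a20 = 0 \<or> cinner a10 a21 = 0"
    and "cinner a11 a20 = 0 \<or> cinner a00 a21 = 0"
    using perp_a01_a30 perp_a10_a31 by blast+
  then show ?thesis
    using perp_a01_a20 perp_a00_a21 by blast
qed

lemma card_perp_a10_a02_a01_a20_a00_a21:
  assumes x: "cinner a10 a02 = 0" and "\<not> row1_tail_aligned"
    and z: "cinner a01 a20 = 0" and w: "cinner a00 a21 = 0"
  shows "card (phase_class ` entries) = 6"
proof -
  have g: "cinner a00 a12 \<noteq> 0" "cinner a01 a12 \<noteq> 0"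
    using assms(2) by auto
  have g': "cinner a00 a13 \<noteq> 0" "cinner a01 a13 \<noteq> 0"
    using g perp_a00_a13 perp_a01_a13 by blast+
  have xp: "phase_eq a11 a02" "phase_eq a10 a03"
    using perp_a10_a02[OF x] by auto
  have zp: "phase_eq a11 a20" "phase_eq a01 a30" "phase_eq a10 a21" "phase_eq a00 a31"
    using perp_a01_a20[OF z] perp_a00_a21[OF w] by auto
  note xp_zero = phase_eq_cinner_left_zero_iff[OF xp(1)] phase_eq_cinner_left_zero_iff[OF xp(2)]
  note zp_zero = phase_eq_cinner_left_zero_iff[OF zp(1)] phase_eq_cinner_left_zero_iff[OF zp(2)]
    phase_eq_cinner_left_zero_iff[OF zp(3)] phase_eq_cinner_left_zero_iff[OF zp(4)]
  have "phase_eq a13 a22"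
    by (rule onb4_phase_eq_fourth[OF blk01]) (simp_all add: orth xp_zero(2)[symmetric] zp_zero(3))
  moreover have "phase_eq a12 a23"
    by (rule onb4_phase_eq_fourth[OF onb4_swap34[OF blk01]])
      (simp_all add: orth xp_zero(1)[symmetric] zp_zero(1))
  moreover have "phase_eq a10 a32"
    using unit_phase_eq_blk00[of a32] by (simp add: orth xp_zero(1) zp_zero(2,4))
  moreover have "phase_eq a11 a33"
    using unit_phase_eq_blk00[of a33] by (simp add: orth xp_zero(2) zp_zero(2,4))
  ultimately have "card (phase_class ` entries) = length [a00, a01, a10, a11, a12, a13]"
    by (intro card_phase_classes_eq_length)
      (simp_all add: phase_eq_refl xp zp phase_class_eq_iff not_phase_eq_of_perp
        not_phase_eq_by_blk00_coord orth g g')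
  then show ?thesis
    by simp
qed

lemma card_perp_a10_a02_row1_generic:
  assumes "cinner a10 a02 = 0" "\<not> row1_tail_aligned"
  shows "card (phase_class ` entries) = 6"
  using col_tails_aligned_of_perp_a10_a02[OF assms]
proof
  assume "cinner a01 a20 = 0 \<and> cinner a00 a21 = 0"
  then show ?thesis
    using card_perp_a10_a02_a01_a20_a00_a21 assms by blast
next
  assume "cinner a10 a21 = 0 \<and> cinner a11 a20 = 0"
  then have "cinner a01 a30 = 0" "cinner a00 a31 = 0"
    using perp_a11_a20 perp_a10_a21 by blast+
  then show ?thesis
    using sudoq_grid.card_perp_a10_a02_a01_a20_a00_a21[OF grid_swap_rows23,
        unfolded entries_swap_rows23]
      assms by blast
qed

lemma card_row0_aligned_row1_generic:
  assumes "row0_tail_aligned" "\<not> row1_tail_aligned"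
  shows "card (phase_class ` entries) = 6"
proof (cases "cinner a10 a02 = 0")
  case True
  then show ?thesis
    using card_perp_a10_a02_row1_generic assms(2) by blast
next
  case False
  then have "cinner a11 a02 = 0"
    using assms(1) by blast
  then show ?thesis
    using sudoq_grid.card_perp_a10_a02_row1_generic[OF grid_swap_cols01,
        unfolded entries_swap_cols01]
      assms(2) by blast
qed

lemma card_row_tails_mixed:
  assumes "row0_tail_aligned \<noteq> row1_tail_aligned"
  shows "card (phase_class ` entries) = 6"
  using assms card_row0_aligned_row1_generic
    sudoq_grid.card_row0_aligned_row1_generic[OF grid_swap_rows01, unfolded entries_swap_rows01]
  by blast

lemma card_col_tails_mixed:
  assumes "col0_tail_aligned \<noteq> col1_tail_aligned"
  shows "card (phase_class ` entries) = 6"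
  using assms sudoq_grid.card_row_tails_mixed[OF grid_transpose, unfolded entries_transpose]
  by blast

lemma card_phase_classes_entries: "card (phase_class ` entries) \<in> {4, 6, 8, 16}"
proof -
  consider "row0_tail_aligned \<noteq> row1_tail_aligned" | "col0_tail_aligned \<noteq> col1_tail_aligned"
    | "\<not> row0_tail_aligned" "\<not> row1_tail_aligned" "\<not> col0_tail_aligned" "\<not> col1_tail_aligned"
    | "row0_tail_aligned" "row1_tail_aligned" "\<not> col0_tail_aligned" "\<not> col1_tail_aligned"
    | "\<not> row0_tail_aligned" "\<not> row1_tail_aligned" "col0_tail_aligned" "col1_tail_aligned"
    | "row0_tail_aligned" "row1_tail_aligned" "col0_tail_aligned" "col1_tail_aligned"
    by argo
  then show ?thesis
  proof cases
    case 1
    then show ?thesis using card_row_tails_mixed by simp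
  next
    case 2
    then show ?thesis using card_col_tails_mixed by simp
  next
    case 3
    then show ?thesis using card_no_tail_aligned by simp
  next
    case 4
    then show ?thesis using card_row_tails_aligned by simp
  next
    case 5
    then show ?thesis
      using sudoq_grid.card_row_tails_aligned[OF grid_transpose, unfolded entries_transpose] by simp
  next
    case 6
    then show ?thesis using card_all_tails_aligned by simp
  qed
qed

end

lemma sudoq4_imp_sudoq_grid:
  assumes "sudoq4 S"
  shows "sudoq_grid (S 0 0) (S 0 1) (S 0 2) (S 0 3) (S 1 0) (S 1 1) (S 1 2) (S 1 3)
    (S 2 0) (S 2 1) (S 2 2) (S 2 3) (S 3 0) (S 3 1) (S 3 2) (S 3 3)"
proof -
  have row: "onb4 (S i 0) (S i 1) (S i 2) (S i 3)" if "i < 4" for i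
    using assms that is_onb_imp_onb4[of "S i"] unfolding sudoq4_def by blast
  have col: "onb4 (S 0 j) (S 1 j) (S 2 j) (S 3 j)" if "j < 4" for j
    using assms that is_onb_imp_onb4[of "\<lambda>i. S i j"] unfolding sudoq4_def by blast
  have blk: "onb4 (S (2 * a) (2 * b)) (S (2 * a) (2 * b + 1)) (S (2 * a + 1) (2 * b))
      (S (2 * a + 1) (2 * b + 1))" if "a < 2" "b < 2" for a b
    using assms that is_onb_imp_onb4[of "\<lambda>k. S (2 * a + k div 2) (2 * b + k mod 2)"]
    unfolding sudoq4_def by simp
  show ?thesis
    unfolding sudoq_grid_def using row[of 0] row[of 1] row[of 2] row[of 3]
      col[of 0] col[of 1] col[of 2] col[of 3] blk[of 0 0] blk[of 0 1] blk[of 1 0] blk[of 1 1]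
    by simp
qed

lemma sudoq_card_eq_card_entries:
  "sudoq_card S = card (phase_class ` set [S 0 0, S 0 1, S 0 2, S 0 3, S 1 0, S 1 1, S 1 2, S 1 3,
    S 2 0, S 2 1, S 2 2, S 2 3, S 3 0, S 3 1, S 3 2, S 3 3])"
proof -
  have "{..<4::nat} = {0, 1, 2, 3}"
    by auto
  then have "(\<lambda>(i, j). S i j) ` ({..<4} \<times> {..<4}) = set [S 0 0, S 0 1, S 0 2, S 0 3,
      S 1 0, S 1 1, S 1 2, S 1 3, S 2 0, S 2 1, S 2 2, S 2 3, S 3 0, S 3 1, S 3 2, S 3 3]"
    by (simp add: insert_commute)
  moreover have "sudoq_card S = card (phase_class ` (\<lambda>(i, j). S i j) ` ({..<4} \<times> {..<4}))"
    unfolding sudoq_card_def phase_class_def by (simp add: image_image case_prod_beta)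
  ultimately show ?thesis
    by simp
qed

theorem mainTheorem17:
  fixes S :: "nat \<Rightarrow> nat \<Rightarrow> complex ^ 4"
  assumes "sudoq4 S"
  shows "sudoq_card S \<in> {4, 6, 8, 16}"
  using sudoq_grid.card_phase_classes_entries[OF sudoq4_imp_sudoq_grid[OF assms]]
  by (simp add: sudoq_card_eq_card_entries)

end
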